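(* Let $\{K_t\}_{t\in(-\infty,T)}$ be a compact convex ancient solution of the planar affine normal flow shrinking to the origin as $t\to T$. Then the affine support function $\sigma(\theta,t)=s(\theta,t)\,\mathfrak{r}^{1/3}(\theta,t)$, viewed as a function of the normal angle $\theta$, satisfies $\partial_t\sigma\le 0$ for all $\theta$ and $t<T$.
   Context: Planar affine normal flow: smooth strictly convex bodies $K_t$ with boundaries evolving by $\partial_t X=-\kappa^{1/3}\nu$ ($\kappa$ curvature, $\nu$ outer unit normal); equivalently, up to tangential reparametrization, $\partial_t X=\mathfrak{n}$, where $\mathfrak{n}=\gamma_{\mathfrak{s}\mathfrak{s}}$ is the affine normal and $\mathfrak{s}$ the affine arc-length. Ancient: exists on $(-\infty,T)$, $T<\infty$. $s$ is the support function of $K_t$ (with respect to the origin, which is interior to all $K_t$) and $\mathfrak{r}=s_{\theta\theta}+s=1/\kappa$ is the radius of curvature, both as functions of the normal angle $\theta$. *)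

theory Defs
  imports "HOL-Analysis.Analysis"
begin

definition supp_fun :: "(real \<times> real) set \<Rightarrow> real \<Rightarrow> real" where
  "supp_fun K \<theta> = Sup ((\<lambda>p. (cos \<theta>, sin \<theta>) \<bullet> p) ` K)"

text \<open>C-infinity smoothness of a real function of two real variables on a set U
  (used with U open): f is differentiable at every point of U, and both partial
  derivatives are again smooth on U.\<close>
coinductive smooth2_on :: "(real \<times> real) set \<Rightarrow> (real \<times> real \<Rightarrow> real) \<Rightarrow> bool" where
  "\<lbrakk> \<forall>x\<in>U. (f has_derivative (\<lambda>h. g1 x * fst h + g2 x * snd h)) (at x);
     smooth2_on U g1; smooth2_on U g2 \<rbrakk> \<Longrightarrow> smooth2_on U f"

definition radius_curv :: "(real \<Rightarrow> real \<Rightarrow> real) \<Rightarrow> real \<Rightarrow> real \<Rightarrow> real" where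
  "radius_curv s \<theta> t = deriv (deriv (\<lambda>\<phi>. s \<phi> t)) \<theta> + s \<theta> t"

text \<open>Ancient solution of the planar affine normal flow on (-infinity, T): a family of
  compact convex bodies containing the origin in their interior, whose support function
  is smooth in (theta, t), strictly convex (r > 0), and evolves by
  d/dt s = - kappa^(1/3) = - r^(-1/3), which is the support-function form of
  d/dt X = - kappa^(1/3) nu.\<close>
definition ancient_ANF :: "(real \<Rightarrow> (real \<times> real) set) \<Rightarrow> real \<Rightarrow> bool" where
  "ancient_ANF K T \<longleftrightarrow>
     (\<forall>t<T. compact (K t) \<and> convex (K t) \<and> (0::real\<times>real) \<in> interior (K t)) \<and>
     smooth2_on (UNIV \<times> {..<T}) (\<lambda>(\<theta>, t). supp_fun (K t) \<theta>) \<and>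
     (\<forall>\<theta> t. t < T \<longrightarrow> radius_curv (\<lambda>\<theta> t. supp_fun (K t) \<theta>) \<theta> t > 0) \<and>
     (\<forall>\<theta> t. t < T \<longrightarrow>
        ((\<lambda>\<tau>. supp_fun (K \<tau>) \<theta>) has_real_derivative
            - ((radius_curv (\<lambda>\<theta> t. supp_fun (K t) \<theta>) \<theta> t) powr (-1/3))) (at t))"

text \<open>K_t shrinks to the origin as t tends to T (Hausdorff convergence to the point 0;
  since 0 lies in every K_t, this amounts to K_t lying in arbitrarily small balls).\<close>
definition shrinks_to_origin :: "(real \<Rightarrow> (real \<times> real) set) \<Rightarrow> real \<Rightarrow> bool" where
  "shrinks_to_origin K T \<longleftrightarrow>
     (\<forall>\<epsilon>>0. \<exists>t0<T. \<forall>t. t0 < t \<and> t < T \<longrightarrow> K t \<subseteq> cball 0 \<epsilon>)"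

definition affine_supp :: "(real \<Rightarrow> (real \<times> real) set) \<Rightarrow> real \<Rightarrow> real \<Rightarrow> real" where
  "affine_supp K \<theta> t = supp_fun (K t) \<theta> * (radius_curv (\<lambda>\<theta> t. supp_fun (K t) \<theta>) \<theta> t) powr (1/3)"

end

theory Submission
  imports Defs "HOL-Library.Periodic_Fun"
begin

text \<open>Write \<open>u = r\<^sup>-\<^sup>1\<^sup>/\<^sup>3 = -\<partial>\<^sub>t s\<close> for the normal speed. Differentiating \<open>r u\<^sup>3 = 1\<close> in time
  gives \<open>3 u\<^sub>t = u\<^sup>4 (u\<^sub>\<theta>\<^sub>\<theta> + u)\<close>, and \<open>u\<^sub>t\<close> satisfies the linearisation of this equation.
  For \<open>t\<^sub>0 < t\<close> the barrier \<open>u\<^sub>t + u / (2 (t - t\<^sub>0))\<close> is positive just after \<open>t\<^sub>0\<close>, and at a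
  first zero the two equations would force it to increase; so it stays positive (a Harnack
  estimate). As the solution is ancient, \<open>t\<^sub>0 \<rightarrow> -\<infinity>\<close> gives \<open>u\<^sub>t \<ge> 0\<close>. Finally \<open>\<sigma> = s / u\<close>,
  so \<open>\<sigma>\<^sub>t = -1 - s u\<^sub>t / u\<^sup>2 \<le> 0\<close> because \<open>s \<ge> 0\<close>.\<close>

definition partial1 :: "(real \<times> real \<Rightarrow> real) \<Rightarrow> real \<times> real \<Rightarrow> real" where
  "partial1 f x = deriv (\<lambda>\<phi>. f (\<phi>, snd x)) (fst x)"

definition partial2 :: "(real \<times> real \<Rightarrow> real) \<Rightarrow> real \<times> real \<Rightarrow> real" where
  "partial2 f x = deriv (\<lambda>\<tau>. f (fst x, \<tau>)) (snd x)"

lemma has_derivative_imp_partial1: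
  assumes "(f has_derivative (\<lambda>h. A * fst h + B * snd h)) (at (a, b))"
  shows "((\<lambda>\<phi>. f (\<phi>, b)) has_real_derivative A) (at a)"
proof -
  have "((\<lambda>\<phi>. (\<phi>, b)) has_derivative (\<lambda>h. (h, 0))) (at a)"
    by (auto intro!: derivative_eq_intros)
  from has_derivative_compose[OF this assms]
  show ?thesis by (simp add: has_field_derivative_def mult_commute_abs)
qed

lemma has_derivative_imp_partial2:
  assumes "(f has_derivative (\<lambda>h. A * fst h + B * snd h)) (at (a, b))"
  shows "((\<lambda>\<tau>. f (a, \<tau>)) has_real_derivative B) (at b)"
proof -
  have "((\<lambda>\<tau>. (a, \<tau>)) has_derivative (\<lambda>h. (0, h))) (at b)"
    by (auto intro!: derivative_eq_intros)
  from has_derivative_compose[OF this assms]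
  show ?thesis by (simp add: has_field_derivative_def mult_commute_abs)
qed

lemma smooth2_on_cong:
  assumes "smooth2_on U f" "open U" "\<And>x. x \<in> U \<Longrightarrow> f x = g x"
  shows "smooth2_on U g"
  using assms(1,3)
proof (coinduction arbitrary: f g)
  case (smooth2_on f g)
  from smooth2_on(1) obtain g1 g2 where
    f': "\<forall>x\<in>U. (f has_derivative (\<lambda>h. g1 x * fst h + g2 x * snd h)) (at x)"
    and "smooth2_on U g1" "smooth2_on U g2"
    by (cases rule: smooth2_on.cases) auto
  moreover have "\<forall>x\<in>U. (g has_derivative (\<lambda>h. g1 x * fst h + g2 x * snd h)) (at x)"
    using f' has_derivative_transform_within_open[OF _ assms(2)] smooth2_on(2) by blast
  ultimately show ?case by blast
qed

lemma smooth2_on_has_derivative_partials: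
  assumes "smooth2_on U f" "open U"
  shows "\<forall>x\<in>U. (f has_derivative (\<lambda>h. partial1 f x * fst h + partial2 f x * snd h)) (at x)"
    and "smooth2_on U (partial1 f)" and "smooth2_on U (partial2 f)"
proof -
  from assms(1) obtain g1 g2 where
    f': "\<forall>x\<in>U. (f has_derivative (\<lambda>h. g1 x * fst h + g2 x * snd h)) (at x)"
    and g: "smooth2_on U g1" "smooth2_on U g2"
    by (cases rule: smooth2_on.cases) auto
  have g1: "g1 x = partial1 f x" and g2: "g2 x = partial2 f x" if "x \<in> U" for x
    using f' that has_derivative_imp_partial1[of f "g1 x" "g2 x" "fst x" "snd x"]
      has_derivative_imp_partial2[of f "g1 x" "g2 x" "fst x" "snd x"]
    by (auto simp: partial1_def partial2_def DERIV_imp_deriv)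
  show "\<forall>x\<in>U. (f has_derivative (\<lambda>h. partial1 f x * fst h + partial2 f x * snd h)) (at x)"
    using f' g1 g2 by simp
  show "smooth2_on U (partial1 f)" using smooth2_on_cong[OF g(1) assms(2) g1] .
  show "smooth2_on U (partial2 f)" using smooth2_on_cong[OF g(2) assms(2) g2] .
qed

lemma smooth2_on_partial1 [intro]: "smooth2_on U f \<Longrightarrow> open U \<Longrightarrow> smooth2_on U (partial1 f)"
  and smooth2_on_partial2 [intro]: "smooth2_on U f \<Longrightarrow> open U \<Longrightarrow> smooth2_on U (partial2 f)"
  using smooth2_on_has_derivative_partials by blast+

lemma smooth2_on_imp_continuous_on: "smooth2_on U f \<Longrightarrow> continuous_on U f"
  by (erule smooth2_on.cases)
    (meson continuous_at_imp_continuous_on has_derivative_continuous)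

lemma smooth2_on_has_real_derivative_partial1:
  "smooth2_on U f \<Longrightarrow> open U \<Longrightarrow> (a, b) \<in> U \<Longrightarrow>
    ((\<lambda>\<phi>. f (\<phi>, b)) has_real_derivative partial1 f (a, b)) (at a)"
  and smooth2_on_has_real_derivative_partial2:
  "smooth2_on U f \<Longrightarrow> open U \<Longrightarrow> (a, b) \<in> U \<Longrightarrow>
    ((\<lambda>\<tau>. f (a, \<tau>)) has_real_derivative partial2 f (a, b)) (at b)"
  using smooth2_on_has_derivative_partials(1) has_derivative_imp_partial1 has_derivative_imp_partial2
  by blast+

lemma second_difference_mvt:
  fixes f f1 f12 :: "real \<times> real \<Rightarrow> real"
  assumes "h > 0" "k > 0"
    and f1: "\<And>x y. x \<in> {a..a+h} \<Longrightarrow> y \<in> {b..b+k} \<Longrightarrow>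
      ((\<lambda>\<phi>. f (\<phi>, y)) has_real_derivative f1 (x, y)) (at x)"
    and f12: "\<And>x y. x \<in> {a..a+h} \<Longrightarrow> y \<in> {b..b+k} \<Longrightarrow>
      ((\<lambda>\<tau>. f1 (x, \<tau>)) has_real_derivative f12 (x, y)) (at y)"
  obtains x y where "x \<in> {a<..<a+h}" "y \<in> {b<..<b+k}"
    "f (a+h, b+k) - f (a+h, b) - f (a, b+k) + f (a, b) = h * k * f12 (x, y)"
proof -
  have "((\<lambda>\<phi>. f (\<phi>, b+k) - f (\<phi>, b)) has_real_derivative f1 (x, b+k) - f1 (x, b)) (at x)"
    if "a \<le> x" "x \<le> a+h" for x
    using that assms(2) by (intro DERIV_diff f1) auto
  from MVT2[of a "a+h", OF _ this] obtain x where x: "a < x" "x < a+h"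
    "f (a+h, b+k) - f (a+h, b) - (f (a, b+k) - f (a, b)) = h * (f1 (x, b+k) - f1 (x, b))"
    using assms(1) by auto
  have "((\<lambda>\<tau>. f1 (x, \<tau>)) has_real_derivative f12 (x, y)) (at y)" if "b \<le> y" "y \<le> b+k" for y
    using that x by (intro f12) auto
  from MVT2[of b "b+k", OF _ this] obtain y where "b < y" "y < b+k" "f1 (x, b+k) - f1 (x, b) = k * f12 (x, y)"
    using assms(2) by auto
  with x show ?thesis
    by (intro that[of x y]) (auto simp: algebra_simps)
qed

lemma mixed_partials_meet:
  fixes f f1 f2 f12 f21 :: "real \<times> real \<Rightarrow> real"
  assumes "\<delta> > 0"
    and f1: "\<And>x y. (x, y) \<in> ball (a, b) \<delta> \<Longrightarrow> ((\<lambda>\<phi>. f (\<phi>, y)) has_real_derivative f1 (x, y)) (at x)"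
    and f12: "\<And>x y. (x, y) \<in> ball (a, b) \<delta> \<Longrightarrow> ((\<lambda>\<tau>. f1 (x, \<tau>)) has_real_derivative f12 (x, y)) (at y)"
    and f2: "\<And>x y. (x, y) \<in> ball (a, b) \<delta> \<Longrightarrow> ((\<lambda>\<tau>. f (x, \<tau>)) has_real_derivative f2 (x, y)) (at y)"
    and f21: "\<And>x y. (x, y) \<in> ball (a, b) \<delta> \<Longrightarrow> ((\<lambda>\<phi>. f2 (\<phi>, y)) has_real_derivative f21 (x, y)) (at x)"
  obtains p q where "p \<in> ball (a, b) \<delta>" "q \<in> ball (a, b) \<delta>" "f12 p = f21 q"
proof -
  define h where "h = \<delta> / 3"
  have h: "h > 0" using \<open>\<delta> > 0\<close> by (simp add: h_def)
  have near: "(x, y) \<in> ball (a, b) \<delta>" if "x \<in> {a..a+h}" "y \<in> {b..b+h}" for x y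
    using norm_Pair_le[of "a - x" "b - y"] that \<open>\<delta> > 0\<close> by (simp add: dist_norm h_def)
  obtain x1 y1 where p: "x1 \<in> {a<..<a+h}" "y1 \<in> {b<..<b+h}"
    "f (a+h, b+h) - f (a+h, b) - f (a, b+h) + f (a, b) = h * h * f12 (x1, y1)"
    using second_difference_mvt[of h h a b f f1 f12] h near f1 f12 by blast
  obtain y2 x2 where q: "y2 \<in> {b<..<b+h}" "x2 \<in> {a<..<a+h}"
    "f (a+h, b+h) - f (a, b+h) - f (a+h, b) + f (a, b) = h * h * f21 (x2, y2)"
    using second_difference_mvt[of h h b a "\<lambda>(y, x). f (x, y)" "\<lambda>(y, x). f2 (x, y)"
        "\<lambda>(y, x). f21 (x, y)"] h near f2 f21 by auto
  show ?thesis
  proof (rule that[of "(x1, y1)" "(x2, y2)"])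
    show "(x1, y1) \<in> ball (a, b) \<delta>" "(x2, y2) \<in> ball (a, b) \<delta>" using near p(1,2) q(1,2) by auto
    show "f12 (x1, y1) = f21 (x2, y2)" using p(3) q(3) h by (simp add: algebra_simps)
  qed
qed

lemma mixed_partials_eq:
  fixes f f1 f2 f12 f21 :: "real \<times> real \<Rightarrow> real"
  assumes "open U" "(a, b) \<in> U"
    and f1: "\<And>x y. (x, y) \<in> U \<Longrightarrow> ((\<lambda>\<phi>. f (\<phi>, y)) has_real_derivative f1 (x, y)) (at x)"
    and f12: "\<And>x y. (x, y) \<in> U \<Longrightarrow> ((\<lambda>\<tau>. f1 (x, \<tau>)) has_real_derivative f12 (x, y)) (at y)"
    and f2: "\<And>x y. (x, y) \<in> U \<Longrightarrow> ((\<lambda>\<tau>. f (x, \<tau>)) has_real_derivative f2 (x, y)) (at y)"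
    and f21: "\<And>x y. (x, y) \<in> U \<Longrightarrow> ((\<lambda>\<phi>. f2 (\<phi>, y)) has_real_derivative f21 (x, y)) (at x)"
    and "isCont f12 (a, b)" "isCont f21 (a, b)"
  shows "f12 (a, b) = f21 (a, b)"
proof -
  have bound: "\<bar>f12 (a, b) - f21 (a, b)\<bar> < 2 * e" if "e > 0" for e
  proof -
    have "\<forall>\<^sub>F z in nhds (a, b). z \<in> U \<and> dist (f12 z) (f12 (a, b)) < e \<and> dist (f21 z) (f21 (a, b)) < e"
      using assms(1,2,7,8) \<open>e > 0\<close>
      by (intro eventually_conj eventually_nhds_in_open tendstoD)
        (auto simp: isCont_def tendsto_at_iff_tendsto_nhds)
    then obtain \<delta> where "\<delta> > 0" and \<delta>: "\<And>z. z \<in> ball (a, b) \<delta> \<Longrightarrow>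
        z \<in> U \<and> dist (f12 z) (f12 (a, b)) < e \<and> dist (f21 z) (f21 (a, b)) < e"
      unfolding eventually_nhds_metric by (auto simp: dist_commute)
    from mixed_partials_meet[OF \<open>\<delta> > 0\<close>, of a b f f1 f12 f2 f21] \<delta> f1 f12 f2 f21
    obtain p q where "p \<in> ball (a, b) \<delta>" "q \<in> ball (a, b) \<delta>" "f12 p = f21 q" by blast
    with \<delta>[of p] \<delta>[of q] show ?thesis by (auto simp: dist_real_def abs_less_iff)
  qed
  show ?thesis
  proof (rule ccontr)
    assume "f12 (a, b) \<noteq> f21 (a, b)"
    then have "\<bar>f12 (a, b) - f21 (a, b)\<bar> / 4 > 0" by simp
    from bound[OF this] show False by simp
  qed
qed

lemma smooth2_on_partials_commute:
  assumes "smooth2_on U f" "open U" "x \<in> U"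
  shows "partial2 (partial1 f) x = partial1 (partial2 f) x"
proof -
  obtain a b where x: "x = (a, b)" by fastforce
  have "isCont (partial2 (partial1 f)) x" "isCont (partial1 (partial2 f)) x"
    using assms by (auto intro!: continuous_on_interior[OF smooth2_on_imp_continuous_on]
        simp: interior_open)
  with assms show ?thesis unfolding x
    by (intro mixed_partials_eq[of U a b f "partial1 f" _ "partial2 f"])
      (auto intro: smooth2_on_has_real_derivative_partial1 smooth2_on_has_real_derivative_partial2)
qed

lemma smooth2_on_partial2_partial1_partial1:
  assumes "smooth2_on (UNIV \<times> V) f" "open V" "t \<in> V"
  shows "partial2 (partial1 (partial1 f)) (\<theta>, t) = partial1 (partial1 (partial2 f)) (\<theta>, t)"
proof -
  have U: "open (UNIV \<times> V)" using assms(2) by (simp add: open_Times)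
  have "partial2 (partial1 (partial1 f)) (\<theta>, t) = partial1 (partial2 (partial1 f)) (\<theta>, t)"
    using smooth2_on_partials_commute[OF smooth2_on_partial1[OF assms(1) U] U] assms(3) by simp
  also have "\<dots> = partial1 (partial1 (partial2 f)) (\<theta>, t)"
    using smooth2_on_partials_commute[OF assms(1) U] assms(3) by (simp add: partial1_def)
  finally show ?thesis .
qed

lemma periodic_value_in_period:
  fixes g :: "real \<Rightarrow> 'a"
  assumes "\<And>x. g (x + p) = g x" "p > 0"
  obtains y where "y \<in> {0..p}" "g y = g x"
proof -
  interpret periodic_fun_simple g p using assms(1) by unfold_locales
  define y where "y = x - of_int \<lfloor>x / p\<rfloor> * p"
  have "of_int \<lfloor>x / p\<rfloor> * p \<le> x"
    by (metis assms(2) of_int_floor_le pos_le_divide_eq)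
  moreover have "x \<le> (of_int \<lfloor>x / p\<rfloor> + 1) * p"
    by (metis assms(2) real_of_int_floor_add_one_ge pos_divide_le_eq)
  ultimately have "y \<in> {0..p}" by (simp add: y_def algebra_simps)
  moreover have "g y = g x" unfolding y_def by (rule minus_of_int)
  ultimately show ?thesis by (rule that)
qed

lemma DERIV_nonneg_at_min:
  fixes g g' :: "real \<Rightarrow> real"
  assumes min: "\<And>y. g x \<le> g y" and g': "\<And>y. (g has_real_derivative g' y) (at y)"
    and g'': "(g' has_real_derivative c) (at x)"
  shows "c \<ge> 0"
proof (rule ccontr)
  assume "\<not> c \<ge> 0"
  have "g' x = 0" using DERIV_local_min[OF g', of 1 x] min by auto
  with \<open>\<not> c \<ge> 0\<close> obtain d where "d > 0" and d: "\<And>h. 0 < h \<Longrightarrow> h < d \<Longrightarrow> g' (x + h) < 0"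
    using DERIV_neg_dec_right[OF g''] by force
  from MVT2[of x "x + d/2" g g'] g' \<open>d > 0\<close> obtain z where
    "x < z" "z < x + d/2" "g (x + d/2) - g x = d/2 * g' z" by auto
  moreover have "g' z < 0" using d[of "z - x"] calculation by auto
  ultimately have "g (x + d/2) < g x" using mult_pos_neg[of d "g' z"] \<open>d > 0\<close> by simp
  with min show False by (simp add: not_le[symmetric])
qed

lemma DERIV_nonpos_at_left_min:
  fixes f :: "real \<Rightarrow> real"
  assumes "(f has_real_derivative l) (at x)" "d > 0"
    and "\<And>h. 0 < h \<Longrightarrow> h < d \<Longrightarrow> f x \<le> f (x - h)"
  shows "l \<le> 0"
proof (rule ccontr)
  assume "\<not> l \<le> 0"
  then obtain d' where "d' > 0" and d': "\<And>h. 0 < h \<Longrightarrow> h < d' \<Longrightarrow> f (x - h) < f x"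
    using DERIV_pos_inc_left[OF assms(1)] by force
  define h where "h = min d d' / 2"
  have "0 < h" "h < d" "h < d'" using assms(2) \<open>d' > 0\<close> by (auto simp: h_def)
  with assms(3) d' show False by (meson not_le)
qed

lemma first_nonpositive_time:
  fixes Z :: "'a::metric_space \<times> real \<Rightarrow> real"
  assumes "compact S" "continuous_on (S \<times> {a..b}) Z" "a \<le> b"
    and start: "\<And>x. x \<in> S \<Longrightarrow> Z (x, a) > 0" and "x1 \<in> S" "Z (x1, b) \<le> 0"
  obtains xs ts where "xs \<in> S" "a < ts" "ts \<le> b" "Z (xs, ts) = 0"
    "\<And>x. x \<in> S \<Longrightarrow> Z (x, ts) \<ge> 0" "\<And>x t. x \<in> S \<Longrightarrow> a \<le> t \<Longrightarrow> t < ts \<Longrightarrow> Z (x, t) > 0"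
proof -
  define C where "C = (S \<times> {a..b}) \<inter> Z -` {..0}"
  have "compact (S \<times> {a..b})" using assms(1) by (intro compact_Times) auto
  moreover have "closed C" unfolding C_def
    by (intro continuous_closed_preimage assms(2) compact_imp_closed calculation closed_atMost)
  ultimately have "compact ((S \<times> {a..b}) \<inter> C)" by (rule compact_Int_closed)
  then have "compact (snd ` C)"
    by (intro compact_continuous_image continuous_intros) (simp add: C_def Int_assoc[symmetric])
  moreover have "(x1, b) \<in> C" using assms(3,5,6) by (simp add: C_def)
  then have "snd ` C \<noteq> {}" by blast
  ultimately obtain ts where "ts \<in> snd ` C" and ts_min: "\<And>t. t \<in> snd ` C \<Longrightarrow> ts \<le> t"
    using compact_attains_inf[of "snd ` C"] by blast
  then obtain xs where "(xs, ts) \<in> C" by force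
  then have xs: "xs \<in> S" "a \<le> ts" "ts \<le> b" "Z (xs, ts) \<le> 0" by (auto simp: C_def)
  have before: "Z (x, t) > 0" if "x \<in> S" "a \<le> t" "t < ts" for x t
  proof (rule ccontr)
    assume "\<not> Z (x, t) > 0"
    with that xs(3) have "t \<in> snd ` C" by (force simp: C_def)
    with ts_min \<open>t < ts\<close> show False by fastforce
  qed
  have "a \<noteq> ts" using start[OF xs(1)] xs(4) by auto
  with xs have "a < ts" by simp
  have at_ts: "Z (x, ts) \<ge> 0" if "x \<in> S" for x
  proof (rule continuous_ge_on_closure[of "{a..<ts}" "\<lambda>t. Z (x, t)"])
    show "continuous_on (closure {a..<ts}) (\<lambda>t. Z (x, t))"
      using \<open>a < ts\<close> xs(3) that
      by (auto intro!: continuous_on_compose2[OF assms(2)] continuous_intros)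
    show "ts \<in> closure {a..<ts}" using \<open>a < ts\<close> by simp
  qed (use before[OF that] in \<open>auto intro: less_imp_le\<close>)
  show ?thesis
    using that[OF xs(1) \<open>a < ts\<close> xs(3) _ at_ts before] at_ts[OF xs(1)] xs(4) by simp
qed

lemma barrier_positive_near_start:
  fixes P u :: "'a::topological_space \<times> real \<Rightarrow> real"
  assumes "compact S" "t0 < t1"
    and P: "continuous_on (S \<times> {t0..t1}) P"
    and u: "continuous_on (S \<times> {t0..t1}) u" "\<And>z. z \<in> S \<times> {t0..t1} \<Longrightarrow> u z > 0"
  obtains ta where "t0 < ta" "ta < t1" "\<And>x. x \<in> S \<Longrightarrow> P (x, ta) + u (x, ta) / (2 * (ta - t0)) > 0"
proof -
  have C: "compact (S \<times> {t0..t1})" using assms(1) by (intro compact_Times) auto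
  obtain M where "M > 0" and M: "\<And>z. z \<in> S \<times> {t0..t1} \<Longrightarrow> \<bar>P z\<bar> \<le> M"
    using compact_imp_bounded[OF compact_continuous_image[OF P C]] by (force simp: bounded_pos)
  have "u z \<noteq> 0" if "z \<in> S \<times> {t0..t1}" for z using u(2)[OF that] by simp
  then have "continuous_on (S \<times> {t0..t1}) (\<lambda>z. inverse (u z))"
    using u(1) by (intro continuous_intros) auto
  then obtain B where "B > 0" and B: "\<And>z. z \<in> S \<times> {t0..t1} \<Longrightarrow> \<bar>inverse (u z)\<bar> \<le> B"
    using compact_imp_bounded[OF compact_continuous_image[OF _ C]] by (force simp: bounded_pos)
  define m where "m = inverse B"
  have "m > 0" using \<open>B > 0\<close> by (simp add: m_def)
  have m: "m \<le> u z" if "z \<in> S \<times> {t0..t1}" for z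
    using le_imp_inverse_le[of "inverse (u z)" B] B[OF that] u(2)[OF that] by (simp add: m_def)
  define \<delta> where "\<delta> = min (m / (4 * M)) ((t1 - t0) / 2)"
  have "\<delta> > 0" "\<delta> < t1 - t0" "2 * \<delta> * M < m"
    using \<open>m > 0\<close> \<open>M > 0\<close> assms(2) by (auto simp: \<delta>_def min_def field_simps)
  show ?thesis
  proof (rule that[of "t0 + \<delta>"])
    fix x assume "x \<in> S"
    then have z: "(x, t0 + \<delta>) \<in> S \<times> {t0..t1}" using \<open>\<delta> > 0\<close> \<open>\<delta> < t1 - t0\<close> by simp
    have "M < u (x, t0 + \<delta>) / (2 * \<delta>)"
      using m[OF z] \<open>2 * \<delta> * M < m\<close> \<open>\<delta> > 0\<close> by (simp add: field_simps)
    with M[OF z] show "P (x, t0 + \<delta>) + u (x, t0 + \<delta>) / (2 * (t0 + \<delta> - t0)) > 0" by simp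
  qed (use \<open>\<delta> > 0\<close> \<open>\<delta> < t1 - t0\<close> in auto)
qed

lemma barrier_has_real_derivative:
  assumes "t \<noteq> t0"
  shows "((\<lambda>t. - 1 / (2 * (t - t0))) has_real_derivative 2 * (- 1 / (2 * (t - t0)))\<^sup>2) (at t)"
  using assms by (auto intro!: derivative_eq_intros simp: power2_eq_square field_simps)

locale speed_equation =
  fixes T :: real and u P u1 u11 P1 P11 P2 :: "real \<times> real \<Rightarrow> real"
  assumes continuous_u: "continuous_on (UNIV \<times> {..<T}) u"
    and continuous_P: "continuous_on (UNIV \<times> {..<T}) P"
    and pos: "t < T \<Longrightarrow> u (\<theta>, t) > 0"
    and periodic_u: "u (\<theta> + 2 * pi, t) = u (\<theta>, t)"
    and periodic_P: "P (\<theta> + 2 * pi, t) = P (\<theta>, t)"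
    and u1: "t < T \<Longrightarrow> ((\<lambda>\<phi>. u (\<phi>, t)) has_real_derivative u1 (\<theta>, t)) (at \<theta>)"
    and u11: "t < T \<Longrightarrow> ((\<lambda>\<phi>. u1 (\<phi>, t)) has_real_derivative u11 (\<theta>, t)) (at \<theta>)"
    and P1: "t < T \<Longrightarrow> ((\<lambda>\<phi>. P (\<phi>, t)) has_real_derivative P1 (\<theta>, t)) (at \<theta>)"
    and P11: "t < T \<Longrightarrow> ((\<lambda>\<phi>. P1 (\<phi>, t)) has_real_derivative P11 (\<theta>, t)) (at \<theta>)"
    and ut: "t < T \<Longrightarrow> ((\<lambda>\<tau>. u (\<theta>, \<tau>)) has_real_derivative P (\<theta>, t)) (at t)"
    and Pt: "t < T \<Longrightarrow> ((\<lambda>\<tau>. P (\<theta>, \<tau>)) has_real_derivative P2 (\<theta>, t)) (at t)"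
    and speed_eq: "t < T \<Longrightarrow> 3 * P (\<theta>, t) = u (\<theta>, t) ^ 4 * (u11 (\<theta>, t) + u (\<theta>, t))"
    and linearized_eq: "t < T \<Longrightarrow> 3 * P2 (\<theta>, t) =
      4 * u (\<theta>, t) ^ 3 * P (\<theta>, t) * (u11 (\<theta>, t) + u (\<theta>, t)) + u (\<theta>, t) ^ 4 * (P11 (\<theta>, t) + P (\<theta>, t))"
begin

lemma barrier_first_touch_impossible:
  fixes \<psi> :: "real \<Rightarrow> real"
  assumes "ts < T" "\<psi> ts \<noteq> 0" "(\<psi> has_real_derivative 2 * \<psi> ts ^ 2) (at ts)"
    and above: "\<And>\<theta>. P (\<theta>, ts) - \<psi> ts * u (\<theta>, ts) \<ge> 0"
    and touch: "P (\<theta>s, ts) = \<psi> ts * u (\<theta>s, ts)"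
    and "\<delta> > 0" and before: "\<And>h. 0 < h \<Longrightarrow> h < \<delta> \<Longrightarrow> P (\<theta>s, ts - h) - \<psi> (ts - h) * u (\<theta>s, ts - h) \<ge> 0"
  shows False
proof -
  let ?U = "u (\<theta>s, ts)" and ?p = "\<psi> ts"
  have spatial: "P11 (\<theta>s, ts) - ?p * u11 (\<theta>s, ts) \<ge> 0"
    using assms(1) above touch
    by (intro DERIV_nonneg_at_min[of "\<lambda>\<phi>. P (\<phi>, ts) - ?p * u (\<phi>, ts)" \<theta>s
          "\<lambda>\<phi>. P1 (\<phi>, ts) - ?p * u1 (\<phi>, ts)"] DERIV_diff DERIV_cmult u1 u11 P1 P11) auto
  have "((\<lambda>\<tau>. P (\<theta>s, \<tau>) - \<psi> \<tau> * u (\<theta>s, \<tau>)) has_real_derivative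
      P2 (\<theta>s, ts) - (2 * ?p ^ 2 * ?U + ?p * P (\<theta>s, ts))) (at ts)"
    using assms(1,3) by (auto intro!: derivative_eq_intros ut Pt)
  then have temporal: "P2 (\<theta>s, ts) - (2 * ?p ^ 2 * ?U + ?p * P (\<theta>s, ts)) \<le> 0"
    by (rule DERIV_nonpos_at_left_min[OF _ \<open>\<delta> > 0\<close>]) (use before touch in auto)
  \<comment> \<open>At the touching point the two equations force the time derivative of the barrier
    difference to be positive.\<close>
  have q: "?U ^ 4 * (u11 (\<theta>s, ts) + ?U) = 3 * ?p * ?U"
    using speed_eq[OF assms(1), of \<theta>s] unfolding touch by (simp add: algebra_simps)
  have "3 * P2 (\<theta>s, ts) = 4 * ?p * (?U ^ 4 * (u11 (\<theta>s, ts) + ?U)) + ?U ^ 4 * P11 (\<theta>s, ts)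
      + ?p * (?U ^ 4 * (u11 (\<theta>s, ts) + ?U)) - ?p * ?U ^ 4 * u11 (\<theta>s, ts)"
    using linearized_eq[OF assms(1), of \<theta>s] unfolding touch by (simp add: algebra_simps power_def)
  also have "\<dots> = 15 * ?p ^ 2 * ?U + ?U ^ 4 * (P11 (\<theta>s, ts) - ?p * u11 (\<theta>s, ts))"
    unfolding q by (simp add: algebra_simps power2_eq_square)
  finally have "3 * (P2 (\<theta>s, ts) - (2 * ?p ^ 2 * ?U + ?p * P (\<theta>s, ts)))
      = 6 * ?p ^ 2 * ?U + ?U ^ 4 * (P11 (\<theta>s, ts) - ?p * u11 (\<theta>s, ts))"
    using touch by (simp add: algebra_simps power2_eq_square)
  moreover have "6 * ?p ^ 2 * ?U > 0" using assms(2) pos[OF assms(1)] by simp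
  moreover have "?U ^ 4 * (P11 (\<theta>s, ts) - ?p * u11 (\<theta>s, ts)) \<ge> 0" using spatial by simp
  ultimately show False using temporal by argo
qed

theorem harnack_estimate:
  assumes "t0 < t1" "t1 < T"
  shows "P (\<theta>1, t1) + u (\<theta>1, t1) / (2 * (t1 - t0)) > 0"
proof (rule ccontr)
  define \<psi> where "\<psi> t = - 1 / (2 * (t - t0))" for t
  define Z where "Z x = P x - \<psi> (snd x) * u x" for x
  assume "\<not> P (\<theta>1, t1) + u (\<theta>1, t1) / (2 * (t1 - t0)) > 0"
  then have "Z (\<theta>1, t1) \<le> 0" by (simp add: Z_def \<psi>_def)
  have two_pi_pos: "2 * pi > 0" by simp
  have Z_periodic: "Z (\<theta> + 2*pi, t) = Z (\<theta>, t)" for \<theta> t by (simp add: Z_def periodic_u periodic_P)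
  obtain \<theta>1' where "\<theta>1' \<in> {0..2*pi}" "Z (\<theta>1', t1) \<le> 0"
    using periodic_value_in_period[of "\<lambda>\<theta>. Z (\<theta>, t1)", OF Z_periodic two_pi_pos] \<open>Z (\<theta>1, t1) \<le> 0\<close>
    by metis
  have "{0..2*pi} \<times> {t0..t1} \<subseteq> UNIV \<times> {..<T}" using assms by auto
  then have cont: "continuous_on ({0..2*pi} \<times> {t0..t1}) P" "continuous_on ({0..2*pi} \<times> {t0..t1}) u"
    using continuous_on_subset continuous_P continuous_u by blast+
  have "u z > 0" if "z \<in> {0..2*pi} \<times> {t0..t1}" for z using that pos assms by auto
  from barrier_positive_near_start[OF compact_Icc \<open>t0 < t1\<close> cont this]
  obtain ta where "t0 < ta" "ta < t1"
    and "\<And>\<theta>. \<theta> \<in> {0..2*pi} \<Longrightarrow> P (\<theta>, ta) + u (\<theta>, ta) / (2 * (ta - t0)) > 0" by blast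
  then have Z_ta: "\<And>\<theta>. \<theta> \<in> {0..2*pi} \<Longrightarrow> Z (\<theta>, ta) > 0" by (simp add: Z_def \<psi>_def)
  have Z_cont: "continuous_on ({0..2*pi} \<times> {ta..t1}) Z"
    unfolding Z_def \<psi>_def using \<open>t0 < ta\<close>
    by (intro continuous_intros continuous_on_subset[OF cont(1)] continuous_on_subset[OF cont(2)]) auto
  obtain \<theta>s ts where "\<theta>s \<in> {0..2*pi}" "ta < ts" "ts \<le> t1" "Z (\<theta>s, ts) = 0"
    and Z_ts: "\<And>\<theta>. \<theta> \<in> {0..2*pi} \<Longrightarrow> Z (\<theta>, ts) \<ge> 0"
    and Z_before: "\<And>\<theta> t. \<theta> \<in> {0..2*pi} \<Longrightarrow> ta \<le> t \<Longrightarrow> t < ts \<Longrightarrow> Z (\<theta>, t) > 0"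
    using first_nonpositive_time[OF compact_Icc Z_cont less_imp_le[OF \<open>ta < t1\<close>] Z_ta
        \<open>\<theta>1' \<in> {0..2*pi}\<close> \<open>Z (\<theta>1', t1) \<le> 0\<close>] by blast
  have "Z (\<theta>, ts) \<ge> 0" for \<theta>
    using periodic_value_in_period[of "\<lambda>\<theta>. Z (\<theta>, ts)", OF Z_periodic two_pi_pos] Z_ts by metis
  show False
  proof (rule barrier_first_touch_impossible[of ts \<psi> \<theta>s "ts - ta"])
    show "ts < T" "\<psi> ts \<noteq> 0" "ts - ta > 0" using \<open>ta < ts\<close> \<open>ts \<le> t1\<close> \<open>t0 < ta\<close> assms
      by (auto simp: \<psi>_def)
    show "(\<psi> has_real_derivative 2 * (\<psi> ts)\<^sup>2) (at ts)"
      unfolding \<psi>_def using \<open>ta < ts\<close> \<open>t0 < ta\<close> by (intro barrier_has_real_derivative) auto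
    show "P (\<theta>, ts) - \<psi> ts * u (\<theta>, ts) \<ge> 0" for \<theta> using \<open>\<And>\<theta>. Z (\<theta>, ts) \<ge> 0\<close> by (simp add: Z_def)
    show "P (\<theta>s, ts) = \<psi> ts * u (\<theta>s, ts)" using \<open>Z (\<theta>s, ts) = 0\<close> by (simp add: Z_def)
    show "P (\<theta>s, ts - h) - \<psi> (ts - h) * u (\<theta>s, ts - h) \<ge> 0" if "0 < h" "h < ts - ta" for h
      using Z_before[of \<theta>s "ts - h"] that \<open>\<theta>s \<in> {0..2*pi}\<close> by (simp add: Z_def)
  qed
qed

text \<open>Letting \<open>t\<^sub>0 \<rightarrow> -\<infinity>\<close> in the Harnack estimate; it suffices to take \<open>t\<^sub>1 - t\<^sub>0 = u / |P|\<close>.\<close>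
theorem time_derivative_nonneg:
  assumes "t1 < T"
  shows "P (\<theta>1, t1) \<ge> 0"
proof (rule ccontr)
  assume "\<not> P (\<theta>1, t1) \<ge> 0"
  with pos[OF assms, of \<theta>1] have "t1 + u (\<theta>1, t1) / P (\<theta>1, t1) < t1" by (simp add: divide_pos_neg)
  from harnack_estimate[OF this assms, of \<theta>1] pos[OF assms, of \<theta>1] \<open>\<not> P (\<theta>1, t1) \<ge> 0\<close>
  show False by simp
qed

end

locale ancient_support_flow =
  fixes s :: "real \<Rightarrow> real \<Rightarrow> real" and T :: real
  assumes smooth: "smooth2_on (UNIV \<times> {..<T}) (\<lambda>(\<theta>, t). s \<theta> t)"
    and radius_pos: "t < T \<Longrightarrow> radius_curv s \<theta> t > 0"
    and evolution: "t < T \<Longrightarrow> ((\<lambda>\<tau>. s \<theta> \<tau>) has_real_derivative - (radius_curv s \<theta> t powr (-1/3))) (at t)"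
    and periodic: "s (\<theta> + 2 * pi) t = s \<theta> t"
begin

abbreviation s_t :: "real \<times> real \<Rightarrow> real" where "s_t \<equiv> partial2 (\<lambda>(\<theta>, t). s \<theta> t)"
abbreviation s_tt :: "real \<times> real \<Rightarrow> real" where "s_tt \<equiv> partial2 s_t"

lemma open_domain: "open (UNIV \<times> {..<T})"
  by (simp add: open_Times)

lemma smooth_s_t: "smooth2_on (UNIV \<times> {..<T}) s_t"
  and smooth_s_tt: "smooth2_on (UNIV \<times> {..<T}) s_tt"
  using smooth open_domain by auto

lemma has_real_derivative_partial1:
  "smooth2_on (UNIV \<times> {..<T}) f \<Longrightarrow> t < T \<Longrightarrow>
    ((\<lambda>\<phi>. f (\<phi>, t)) has_real_derivative partial1 f (\<theta>, t)) (at \<theta>)"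
  using smooth2_on_has_real_derivative_partial1 open_domain by blast

lemma has_real_derivative_partial2:
  "smooth2_on (UNIV \<times> {..<T}) f \<Longrightarrow> t < T \<Longrightarrow>
    ((\<lambda>\<tau>. f (\<theta>, \<tau>)) has_real_derivative partial2 f (\<theta>, t)) (at t)"
  using smooth2_on_has_real_derivative_partial2 open_domain by blast

lemma s_has_time_derivative: "t < T \<Longrightarrow> ((\<lambda>\<tau>. s \<theta> \<tau>) has_real_derivative s_t (\<theta>, t)) (at t)"
  using has_real_derivative_partial2[OF smooth] by simp

lemma s_t_eq: "t < T \<Longrightarrow> s_t (\<theta>, t) = - (radius_curv s \<theta> t powr (-1/3))"
  using s_has_time_derivative evolution by (rule DERIV_unique)

lemma s_t_neg:
  assumes "t < T"
  shows "s_t (\<theta>, t) < 0"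
proof -
  have "radius_curv s \<theta> t powr (-1/3) > 0" using radius_pos[OF assms, of \<theta>] by (metis powr_gt_zero less_irrefl)
  then show ?thesis unfolding s_t_eq[OF assms] by simp
qed

lemma radius_mult_s_t_cube:
  assumes "t < T"
  shows "radius_curv s \<theta> t * s_t (\<theta>, t) ^ 3 = -1"
proof -
  have r: "radius_curv s \<theta> t > 0" using radius_pos[OF assms] .
  have "(radius_curv s \<theta> t powr (-1/3)) ^ 3 = radius_curv s \<theta> t powr (-1)"
    using r by (simp add: powr_power)
  also have "\<dots> = 1 / radius_curv s \<theta> t" using powr_neg_one[OF r] by simp
  finally show ?thesis using r unfolding s_t_eq[OF assms] by simp
qed

lemma radius_curv_eq: "radius_curv s \<theta> t = partial1 (partial1 (\<lambda>(\<theta>, t). s \<theta> t)) (\<theta>, t) + s \<theta> t"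
  by (simp add: radius_curv_def partial1_def)

lemma radius_has_time_derivative:
  assumes "t < T"
  shows "((\<lambda>\<tau>. radius_curv s \<theta> \<tau>) has_real_derivative partial1 (partial1 s_t) (\<theta>, t) + s_t (\<theta>, t)) (at t)"
proof -
  have "smooth2_on (UNIV \<times> {..<T}) (partial1 (partial1 (\<lambda>(\<theta>, t). s \<theta> t)))"
    using smooth open_domain by auto
  from DERIV_add[OF has_real_derivative_partial2[OF this assms] s_has_time_derivative[OF assms]]
  show ?thesis
    using smooth2_on_partial2_partial1_partial1[OF smooth] assms by (simp add: radius_curv_eq)
qed

lemma s_t_equation:
  assumes "t < T"
  shows "3 * s_tt (\<theta>, t) = s_t (\<theta>, t) ^ 4 * (partial1 (partial1 s_t) (\<theta>, t) + s_t (\<theta>, t))"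
proof -
  let ?r = "radius_curv s \<theta> t" and ?G = "s_t (\<theta>, t)" and ?H = "s_tt (\<theta>, t)"
    and ?q = "partial1 (partial1 s_t) (\<theta>, t) + s_t (\<theta>, t)"
  have "((\<lambda>\<tau>. radius_curv s \<theta> \<tau> * s_t (\<theta>, \<tau>) ^ 3) has_real_derivative ?q * ?G ^ 3 + ?r * (3 * ?G ^ 2 * ?H)) (at t)"
    using DERIV_mult[OF radius_has_time_derivative[OF assms]
        DERIV_power[OF has_real_derivative_partial2[OF smooth_s_t assms, of \<theta>], where n=3]]
    by (simp add: ac_simps)
  moreover have "((\<lambda>\<tau>. radius_curv s \<theta> \<tau> * s_t (\<theta>, \<tau>) ^ 3) has_real_derivative 0) (at t)"
    by (rule has_field_derivative_transform_within_open[OF DERIV_const, of "{..<T}"])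
      (use assms radius_mult_s_t_cube in auto)
  ultimately have "?q * ?G ^ 3 + ?r * (3 * ?G ^ 2 * ?H) = 0" by (rule DERIV_unique)
  then have "?G * (?q * ?G ^ 3 + ?r * (3 * ?G ^ 2 * ?H)) = 0" by simp
  then have "?q * ?G ^ 4 + 3 * (?r * ?G ^ 3) * ?H = 0"
    by (simp add: power2_eq_square power3_eq_cube power4_eq_xxxx algebra_simps)
  then show ?thesis using radius_mult_s_t_cube[OF assms] by (simp add: mult.commute)
qed

lemma s_tt_equation:
  assumes "t < T"
  shows "3 * partial2 s_tt (\<theta>, t) =
    4 * s_t (\<theta>, t) ^ 3 * s_tt (\<theta>, t) * (partial1 (partial1 s_t) (\<theta>, t) + s_t (\<theta>, t))
    + s_t (\<theta>, t) ^ 4 * (partial1 (partial1 s_tt) (\<theta>, t) + s_tt (\<theta>, t))"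
proof -
  have "smooth2_on (UNIV \<times> {..<T}) (partial1 (partial1 s_t))"
    using smooth_s_t open_domain by auto
  from DERIV_mult[OF DERIV_power[OF has_real_derivative_partial2[OF smooth_s_t assms, of \<theta>], where n=4]
      DERIV_add[OF has_real_derivative_partial2[OF this assms] has_real_derivative_partial2[OF smooth_s_t assms]]]
  have expand: "((\<lambda>\<tau>. s_t (\<theta>, \<tau>) ^ 4 * (partial1 (partial1 s_t) (\<theta>, \<tau>) + s_t (\<theta>, \<tau>))) has_real_derivative
      4 * s_t (\<theta>, t) ^ 3 * s_tt (\<theta>, t) * (partial1 (partial1 s_t) (\<theta>, t) + s_t (\<theta>, t))
      + s_t (\<theta>, t) ^ 4 * (partial1 (partial1 s_tt) (\<theta>, t) + s_tt (\<theta>, t))) (at t)"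
    using smooth2_on_partial2_partial1_partial1[OF smooth_s_t open_lessThan] assms
    by (simp add: ac_simps)
  have "((\<lambda>\<tau>. s_t (\<theta>, \<tau>) ^ 4 * (partial1 (partial1 s_t) (\<theta>, \<tau>) + s_t (\<theta>, \<tau>)))
      has_real_derivative 3 * partial2 s_tt (\<theta>, t)) (at t)"
    by (rule has_field_derivative_transform_within_open[
          OF DERIV_cmult[OF has_real_derivative_partial2[OF smooth_s_tt assms]], of "{..<T}"])
      (use assms s_t_equation in auto)
  from DERIV_unique[OF this expand] show ?thesis .
qed

lemma periodic_s_t: "s_t (\<theta> + 2 * pi, t) = s_t (\<theta>, t)"
  and periodic_s_tt: "s_tt (\<theta> + 2 * pi, t) = s_tt (\<theta>, t)"
  by (simp_all add: partial2_def periodic)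

sublocale speed: speed_equation T "\<lambda>x. - s_t x" "\<lambda>x. - s_tt x" "\<lambda>x. - partial1 s_t x"
  "\<lambda>x. - partial1 (partial1 s_t) x" "\<lambda>x. - partial1 s_tt x" "\<lambda>x. - partial1 (partial1 s_tt) x"
  "\<lambda>x. - partial2 s_tt x"
proof unfold_locales
  show "continuous_on (UNIV \<times> {..<T}) (\<lambda>x. - s_t x)" "continuous_on (UNIV \<times> {..<T}) (\<lambda>x. - s_tt x)"
    using smooth_s_t smooth_s_tt by (auto intro: continuous_on_minus[OF smooth2_on_imp_continuous_on])
  have "smooth2_on (UNIV \<times> {..<T}) (partial1 s_t)" "smooth2_on (UNIV \<times> {..<T}) (partial1 s_tt)"
    using smooth_s_t smooth_s_tt open_domain by auto
  with smooth_s_t smooth_s_tt show "\<And>t \<theta>. t < T \<Longrightarrow>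
      ((\<lambda>\<phi>. - s_t (\<phi>, t)) has_real_derivative - partial1 s_t (\<theta>, t)) (at \<theta>)"
    "\<And>t \<theta>. t < T \<Longrightarrow>
      ((\<lambda>\<phi>. - partial1 s_t (\<phi>, t)) has_real_derivative - partial1 (partial1 s_t) (\<theta>, t)) (at \<theta>)"
    "\<And>t \<theta>. t < T \<Longrightarrow>
      ((\<lambda>\<phi>. - s_tt (\<phi>, t)) has_real_derivative - partial1 s_tt (\<theta>, t)) (at \<theta>)"
    "\<And>t \<theta>. t < T \<Longrightarrow>
      ((\<lambda>\<phi>. - partial1 s_tt (\<phi>, t)) has_real_derivative - partial1 (partial1 s_tt) (\<theta>, t)) (at \<theta>)"
    "\<And>t \<theta>. t < T \<Longrightarrow> ((\<lambda>\<tau>. - s_t (\<theta>, \<tau>)) has_real_derivative - s_tt (\<theta>, t)) (at t)"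
    "\<And>t \<theta>. t < T \<Longrightarrow> ((\<lambda>\<tau>. - s_tt (\<theta>, \<tau>)) has_real_derivative - partial2 s_tt (\<theta>, t)) (at t)"
    by (auto intro!: DERIV_minus has_real_derivative_partial1 has_real_derivative_partial2)
  show "\<And>t \<theta>. t < T \<Longrightarrow> - s_t (\<theta>, t) > 0" using s_t_neg by simp
  show "\<And>\<theta> t. - s_t (\<theta> + 2 * pi, t) = - s_t (\<theta>, t)" "\<And>\<theta> t. - s_tt (\<theta> + 2 * pi, t) = - s_tt (\<theta>, t)"
    using periodic_s_t periodic_s_tt by simp_all
  show "3 * - s_tt (\<theta>, t) = (- s_t (\<theta>, t)) ^ 4 * (- partial1 (partial1 s_t) (\<theta>, t) + - s_t (\<theta>, t))"
    if "t < T" for t \<theta>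
    using s_t_equation[OF that, of \<theta>] by (simp add: algebra_simps)
  show "3 * - partial2 s_tt (\<theta>, t) =
      4 * (- s_t (\<theta>, t)) ^ 3 * - s_tt (\<theta>, t) * (- partial1 (partial1 s_t) (\<theta>, t) + - s_t (\<theta>, t))
      + (- s_t (\<theta>, t)) ^ 4 * (- partial1 (partial1 s_tt) (\<theta>, t) + - s_tt (\<theta>, t))"
    if "t < T" for t \<theta>
    using s_tt_equation[OF that, of \<theta>] by (simp add: algebra_simps)
qed

lemma s_tt_nonpos: "t < T \<Longrightarrow> s_tt (\<theta>, t) \<le> 0"
  using speed.time_derivative_nonneg by simp

lemma affine_support_has_time_derivative:
  assumes "t < T"
  shows "((\<lambda>\<tau>. s \<theta> \<tau> * radius_curv s \<theta> \<tau> powr (1/3)) has_real_derivative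
    - 1 + s \<theta> t * s_tt (\<theta>, t) / s_t (\<theta>, t) ^ 2) (at t)"
proof -
  have eq: "s \<theta> \<tau> / - s_t (\<theta>, \<tau>) = s \<theta> \<tau> * radius_curv s \<theta> \<tau> powr (1/3)" if "\<tau> \<in> {..<T}" for \<tau>
  proof -
    have "- s_t (\<theta>, \<tau>) = radius_curv s \<theta> \<tau> powr (-1/3)" using s_t_eq[of \<tau> \<theta>] that by simp
    also have "\<dots> = inverse (radius_curv s \<theta> \<tau> powr (1/3))" by (metis powr_minus minus_divide_left)
    finally have "- s_t (\<theta>, \<tau>) = inverse (radius_curv s \<theta> \<tau> powr (1/3))" .
    then show ?thesis by (simp only: divide_inverse inverse_inverse_eq)
  qed
  have "((\<lambda>\<tau>. s \<theta> \<tau> / - s_t (\<theta>, \<tau>)) has_real_derivative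
      - 1 + s \<theta> t * s_tt (\<theta>, t) / s_t (\<theta>, t) ^ 2) (at t)"
    using DERIV_divide[OF s_has_time_derivative[OF assms, of \<theta>]
        DERIV_minus[OF has_real_derivative_partial2[OF smooth_s_t assms, of \<theta>]]] s_t_neg[OF assms, of \<theta>]
    by (simp add: diff_divide_distrib add_divide_distrib power2_eq_square)
  then show ?thesis
    by (rule has_field_derivative_transform_within_open[OF _ open_lessThan]) (use assms eq in auto)
qed

lemma affine_support_time_deriv_nonpos:
  assumes "t < T" "s \<theta> t \<ge> 0"
  shows "deriv (\<lambda>\<tau>. s \<theta> \<tau> * radius_curv s \<theta> \<tau> powr (1/3)) t \<le> 0"
proof -
  have "s \<theta> t * s_tt (\<theta>, t) / s_t (\<theta>, t) ^ 2 \<le> 0"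
    using assms(2) s_tt_nonpos[OF assms(1), of \<theta>] by (intro divide_nonpos_nonneg mult_nonneg_nonpos) auto
  then show ?thesis using DERIV_imp_deriv[OF affine_support_has_time_derivative[OF assms(1)]] by simp
qed

end

lemma supp_fun_nonneg:
  assumes "compact K" "0 \<in> K"
  shows "supp_fun K \<theta> \<ge> 0"
proof -
  have "compact ((\<lambda>p. (cos \<theta>, sin \<theta>) \<bullet> p) ` K)"
    by (rule compact_continuous_image[OF _ assms(1)]) (intro continuous_intros)
  then have "bdd_above ((\<lambda>p. (cos \<theta>, sin \<theta>) \<bullet> p) ` K)"
    by (intro bounded_imp_bdd_above compact_imp_bounded)
  moreover have "0 \<in> (\<lambda>p. (cos \<theta>, sin \<theta>) \<bullet> p) ` K" using assms(2) by force
  ultimately show ?thesis unfolding supp_fun_def by (intro cSup_upper)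
qed

theorem mainTheorem2:
  fixes K :: "real \<Rightarrow> (real \<times> real) set" and T :: real
  assumes "ancient_ANF K T"
    and "shrinks_to_origin K T"
  shows "\<forall>\<theta> t. t < T \<longrightarrow> deriv (\<lambda>\<tau>. affine_supp K \<theta> \<tau>) t \<le> 0"
proof (intro allI impI)
  fix \<theta> t assume "t < T"
  note flow = assms(1)[unfolded ancient_ANF_def]
  interpret ancient_support_flow "\<lambda>\<theta> t. supp_fun (K t) \<theta>" T
  proof unfold_locales
    show "supp_fun (K t) (\<theta> + 2 * pi) = supp_fun (K t) \<theta>" for \<theta> t by (simp add: supp_fun_def)
  qed (use flow in blast)+
  have "compact (K t)" "0 \<in> K t"
    using flow \<open>t < T\<close> interior_subset by auto
  then have "supp_fun (K t) \<theta> \<ge> 0" by (rule supp_fun_nonneg)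
  with \<open>t < T\<close> show "deriv (\<lambda>\<tau>. affine_supp K \<theta> \<tau>) t \<le> 0"
    unfolding affine_supp_def by (rule affine_support_time_deriv_nonpos)
qed

end
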